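(* Assume $x(0)=x'(0)=0$. Suppose that $y_2(t)=o(1/A(t))$ as $t\to\infty$ and $\int_0^\infty A(s)|y_2(s)|\,ds<\infty$. Then there exist constants $c_1,c_2$ such that \[ x(t)=\frac{c_1\sin(\omega t)+c_2\cos(\omega t)}{A(t)}+o\Big(\frac{1}{A(t)}\Big)\quad(t\to\infty). \]
   Context: Standing assumptions: $\omega>0$ is a constant; $p\in C^1([0,\infty))$ with $p(t)>0$ and $p'(t)<0$ for all $t\ge0$, $\int_0^\infty p(t)\,dt=\infty$ and $\int_0^\infty p(t)^2\,dt<\infty$; $f\in L^1_{\mathrm{loc}}([0,\infty))$. $x$ denotes the solution of $x''(t)+p(t)x'(t)+\omega^2x(t)=f(t)$, $t\ge0$. Notation: $A(t)=\exp(\frac12\int_0^tp(s)\,ds)$; $y_1(t)=\int_0^te^{-\omega^2(t-s)}f(s)\,ds$; $y_2(t)=\int_0^te^{-\omega^2(t-s)}y_1(s)\,ds=\int_0^t(t-s)e^{-\omega^2(t-s)}f(s)\,ds$. *)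

theory Defs
  imports "HOL-Analysis.Analysis" "HOL-Library.Landau_Symbols"
begin

definition Afun :: "(real \<Rightarrow> real) \<Rightarrow> real \<Rightarrow> real" where
  "Afun p t = exp ((1/2) * (LINT s:{0..t}|lborel. p s))"

definition y1fun :: "real \<Rightarrow> (real \<Rightarrow> real) \<Rightarrow> real \<Rightarrow> real" where
  "y1fun \<omega> f t = (LINT s:{0..t}|lborel. exp (- (\<omega>^2) * (t - s)) * f s)"

definition y2fun :: "real \<Rightarrow> (real \<Rightarrow> real) \<Rightarrow> real \<Rightarrow> real" where
  "y2fun \<omega> f t = (LINT s:{0..t}|lborel. exp (- (\<omega>^2) * (t - s)) * y1fun \<omega> f s)"

end

theory Submission
  imports Defs
begin

text \<open>
  Put \<open>z = A x\<close> and \<open>q = p\<^sup>2/4 + p'/2\<close>; \<open>q\<close> is integrable because \<open>p\<^sup>2\<close> is and the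
  monotone \<open>p\<close> has integrable derivative. Then \<open>z'' + \<omega>\<^sup>2 z = A f + q z\<close>, so for
  \<open>u = cos (\<omega> t)\<close> and \<open>u = sin (\<omega> t)\<close> the Wronskian \<open>u z' - u' z\<close> equals
  \<open>\<integral>\<^sub>0\<^sup>t u (A f + q z)\<close>; since \<open>x'\<close> is only an indefinite integral, this is obtained by
  integration by parts instead of differentiation. Two further integrations by parts against
  \<open>exp (-\<omega>\<^sup>2 (t - s))\<close> turn \<open>\<integral> A u f\<close> into boundary terms in \<open>y\<^sub>1\<close>, \<open>y\<^sub>2\<close> plus
  \<open>\<integral> ((d/dt - \<omega>\<^sup>2)\<^sup>2 (A u)) y\<^sub>2\<close>. The \<open>y\<^sub>1\<close> terms cancel in
  \<open>sin (\<omega> t) W\<^sub>c\<^sub>o\<^sub>s - cos (\<omega> t) W\<^sub>s\<^sub>i\<^sub>n = \<omega> z\<close>, which gives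
  \<open>\<bar>z t\<bar> \<le> C + (2/\<omega>) \<integral>\<^sub>0\<^sup>t \<bar>q\<bar> \<bar>z\<bar>\<close>, and Gronwall's lemma bounds \<open>z\<close>. Then every
  remaining integral converges absolutely, and \<open>\<omega> z t - (L\<^sub>c sin (\<omega> t) - L\<^sub>s cos (\<omega> t)) \<rightarrow> 0\<close>.
\<close>

lemma set_integrable_continuous_mult_Icc:
  fixes E g :: "real \<Rightarrow> real"
  assumes E: "continuous_on {a..b} E" and g: "set_integrable lborel {a..b} g"
  shows "set_integrable lborel {a..b} (\<lambda>s. E s * g s)"
proof -
  obtain C where C: "\<And>s. s \<in> {a..b} \<Longrightarrow> \<bar>E s\<bar> \<le> C"
    using compact_imp_bounded[OF compact_continuous_image[OF E compact_Icc]]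
    unfolding bounded_iff by fastforce
  have "(\<lambda>s. indicator {a..b} s * E s) \<in> borel_measurable lborel"
    using borel_measurable_continuous_on_indicator[OF _ E] by simp
  moreover have "(\<lambda>s. indicator {a..b} s * g s) \<in> borel_measurable lborel"
    using g by (simp add: set_integrable_def borel_measurable_integrable)
  ultimately have "(\<lambda>s. (indicator {a..b} s * E s) * (indicator {a..b} s * g s)) \<in> borel_measurable lborel"
    by measurable
  then have measurable: "set_borel_measurable lborel {a..b} (\<lambda>s. E s * g s)"
    unfolding set_borel_measurable_def by (rule measurable_cong[THEN iffD1, rotated]) (simp add: indicator_def)
  show ?thesis
  proof (rule set_integrable_bound[OF _ measurable])
    show "set_integrable lborel {a..b} (\<lambda>s. C * g s)"
      using g by simp
    show "AE s in lborel. s \<in> {a..b} \<longrightarrow> norm (E s * g s) \<le> norm (C * g s)"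
    proof (rule AE_I2, intro impI)
      fix s assume "s \<in> {a..b}"
      then have "\<bar>E s\<bar> \<le> \<bar>C\<bar>"
        using C by force
      then show "norm (E s * g s) \<le> norm (C * g s)"
        by (simp add: abs_mult mult_right_mono)
    qed
  qed
qed

lemma set_integral_FTC_Icc:
  fixes F f :: "real \<Rightarrow> real"
  assumes "a \<le> b"
    and "\<And>s. s \<in> {a..b} \<Longrightarrow> (F has_real_derivative f s) (at s within {a..b})"
    and "continuous_on {a..b} f"
  shows "(LINT s:{a..b}|lborel. f s) = F b - F a"
  using integral_FTC_Icc[of a b F f] assms
  by (simp add: set_lebesgue_integral_def has_real_derivative_iff_has_vector_derivative)

lemma set_integral_has_real_derivative:
  fixes h :: "real \<Rightarrow> real"
  assumes "continuous_on {a..b} h" "t \<in> {a..b}"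
  shows "((\<lambda>s. LINT r:{a..s}|lborel. h r) has_real_derivative h t) (at t within {a..b})"
proof (rule has_field_derivative_transform_within[OF integral_has_real_derivative[OF assms], where d=1])
  show "integral {a..s} h = (LINT r:{a..s}|lborel. h r)" if "s \<in> {a..b}" for s
    using assms(1) that
    by (intro set_borel_integral_eq_integral(2)[symmetric] borel_integrable_atLeastAtMost')
       (auto intro: continuous_on_subset)
qed (use assms in auto)

lemma indefinite_set_integral_continuous:
  fixes h :: "real \<Rightarrow> real"
  assumes h: "set_integrable lborel {a..b} h"
  shows "continuous_on {a..b} (\<lambda>s. LINT r:{a..s}|lborel. h r)"
proof (rule continuous_on_eq)
  show "continuous_on {a..b} (\<lambda>s. integral {a..s} h)"
    by (rule indefinite_integral_continuous_1[OF set_borel_integral_eq_integral(1)[OF h]])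
  show "integral {a..s} h = (LINT r:{a..s}|lborel. h r)" if "s \<in> {a..b}" for s
    using that by (intro set_borel_integral_eq_integral(2)[symmetric] set_integrable_subset[OF h]) auto
qed

lemma continuous_on_atLeast_of_Icc:
  fixes h :: "real \<Rightarrow> 'a::topological_space"
  assumes "\<And>T. T \<ge> a \<Longrightarrow> continuous_on {a..T} h"
  shows "continuous_on {a..} h"
  unfolding continuous_on_eq_continuous_within
proof
  fix s assume s: "s \<in> {a..}"
  have "continuous (at s within {a..s+1}) h"
    using assms[of "s+1"] s by (auto simp: continuous_on_eq_continuous_within)
  moreover have "at s within {a..} = at s within {a..s+1}"
    by (rule at_within_nhd[where S="{..<s+1}"]) (use s in auto)
  ultimately show "continuous (at s within {a..}) h"
    by (simp add: continuous_within)
qed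

lemma DERIV_within_nonpos_imp_nonincreasing:
  fixes f f' :: "real \<Rightarrow> real"
  assumes "a \<le> b"
    and f: "\<And>s. s \<in> {a..b} \<Longrightarrow> (f has_real_derivative f' s) (at s within {a..b})"
    and nonpos: "\<And>s. s \<in> {a<..<b} \<Longrightarrow> f' s \<le> 0"
  shows "f b \<le> f a"
proof (cases "a < b")
  case True
  obtain z where z: "z \<in> {a<..<b}" "f b - f a = f' z * (b - a)"
    using mvt_simple[OF True, of f "\<lambda>s. (*) (f' s)"] f by (auto simp: has_field_derivative_def)
  moreover have "f' z * (b - a) \<le> 0"
    using nonpos[OF z(1)] True by (simp add: mult_nonpos_nonneg)
  ultimately show ?thesis
    by simp
qed (use assms in auto)

lemma set_integral_indefinite_swap:
  fixes e g :: "real \<Rightarrow> real"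
  assumes e: "set_integrable lborel {a..b} e" and g: "set_integrable lborel {a..b} g"
  shows "(LINT s:{a..b}|lborel. e s * (LINT r:{a..s}|lborel. g r))
       = (LINT r:{a..b}|lborel. g r * (LINT s:{r..b}|lborel. e s))"
proof -
  define ei where "ei s = indicator {a..b} s * e s" for s
  define gi where "gi r = indicator {a..b} r * g r" for r
  define F where "F s r = ei s * of_bool (r \<le> s) * gi r" for s r
  have ei: "integrable lborel ei" and gi: "integrable lborel gi"
    using e g by (simp_all add: ei_def[abs_def] gi_def[abs_def] set_integrable_def)
  have [measurable]: "ei \<in> borel_measurable lborel" "gi \<in> borel_measurable lborel"
    using ei gi by auto
  have "integrable (lborel \<Otimes>\<^sub>M lborel) (\<lambda>(s, r). \<bar>ei s\<bar> * \<bar>gi r\<bar>)"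
    by (rule lborel_pair.Fubini_integrable) (use ei gi in auto)
  then have "integrable (lborel \<Otimes>\<^sub>M lborel) (\<lambda>(s, r). F s r)"
    by (rule Bochner_Integration.integrable_bound) (auto simp: F_def abs_mult intro!: AE_I2)
  then have "(\<integral>r. (\<integral>s. F s r \<partial>lborel) \<partial>lborel) = (\<integral>s. (\<integral>r. F s r \<partial>lborel) \<partial>lborel)"
    by (rule lborel_pair.Fubini_integral)
  moreover have "(\<integral>r. F s r \<partial>lborel) = indicator {a..b} s * (e s * (LINT r:{a..s}|lborel. g r))" for s
  proof (cases "s \<in> {a..b}")
    case True
    then have "(\<lambda>r. F s r) = (\<lambda>r. e s * (indicator {a..s} r * g r))"
      by (auto simp: F_def ei_def gi_def indicator_def)
    then show ?thesis
      using True by (simp add: set_lebesgue_integral_def)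
  qed (simp add: F_def ei_def)
  moreover have "(\<integral>s. F s r \<partial>lborel) = indicator {a..b} r * (g r * (LINT s:{r..b}|lborel. e s))" for r
  proof (cases "r \<in> {a..b}")
    case True
    then have "(\<lambda>s. F s r) = (\<lambda>s. g r * (indicator {r..b} s * e s))"
      by (auto simp: F_def ei_def gi_def indicator_def)
    then show ?thesis
      using True by (simp add: set_lebesgue_integral_def)
  qed (simp add: F_def gi_def)
  ultimately show ?thesis
    by (simp add: set_lebesgue_integral_def)
qed

lemma set_integral_by_parts_indefinite:
  fixes E E' g :: "real \<Rightarrow> real"
  assumes ab: "a \<le> b" and g: "set_integrable lborel {a..b} g"
    and E: "\<And>s. s \<in> {a..b} \<Longrightarrow> (E has_real_derivative E' s) (at s within {a..b})"
    and E': "continuous_on {a..b} E'"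
  shows "(LINT s:{a..b}|lborel. E s * g s)
       = E b * (LINT s:{a..b}|lborel. g s) - (LINT s:{a..b}|lborel. E' s * (LINT r:{a..s}|lborel. g r))"
proof -
  have cE: "continuous_on {a..b} E"
    using E by (meson DERIV_continuous continuous_on_eq_continuous_within)
  have "(LINT s:{a..b}|lborel. E' s * (LINT r:{a..s}|lborel. g r))
      = (LINT r:{a..b}|lborel. g r * (LINT s:{r..b}|lborel. E' s))"
    by (rule set_integral_indefinite_swap[OF borel_integrable_atLeastAtMost'[OF E'] g])
  also have "\<dots> = (LINT r:{a..b}|lborel. E b * g r - E r * g r)"
  proof (intro set_lebesgue_integral_cong allI impI)
    fix r assume r: "r \<in> {a..b}"
    have "(LINT s:{r..b}|lborel. E' s) = E b - E r"
    proof (rule set_integral_FTC_Icc)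
      show "(E has_real_derivative E' s) (at s within {r..b})" if "s \<in> {r..b}" for s
        using r that by (intro has_field_derivative_subset[OF E]) auto
      show "continuous_on {r..b} E'"
        using r by (intro continuous_on_subset[OF E']) auto
    qed (use r in auto)
    then show "g r * (LINT s:{r..b}|lborel. E' s) = E b * g r - E r * g r"
      by (simp only: right_diff_distrib mult.commute)
  qed simp
  also have "\<dots> = E b * (LINT s:{a..b}|lborel. g s) - (LINT s:{a..b}|lborel. E s * g s)"
    using g set_integrable_continuous_mult_Icc[OF cE g] by simp
  finally show ?thesis
    by simp
qed

text \<open>
  The inner integral \<open>Y s\<close> solves \<open>Y' + c Y = g\<close>, \<open>Y a = 0\<close>; the identity is integration by
  parts in \<open>\<integral> E (Y' + c Y)\<close>.
\<close>

lemma set_integral_by_parts_resolvent: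
  fixes E E' g :: "real \<Rightarrow> real" and c :: real
  assumes ab: "a \<le> b" and g: "set_integrable lborel {a..b} g"
    and E: "\<And>s. s \<in> {a..b} \<Longrightarrow> (E has_real_derivative E' s) (at s within {a..b})"
    and E': "continuous_on {a..b} E'"
  shows "(LINT s:{a..b}|lborel. E s * g s)
       = E b * (LINT s:{a..b}|lborel. exp (- c * (b - s)) * g s)
         - (LINT s:{a..b}|lborel. (E' s - c * E s) * (LINT r:{a..s}|lborel. exp (- c * (s - r)) * g r))"
proof -
  have exp_split: "exp (- c * (s - r)) = exp (- c * s) * exp (c * r)" for s r
    by (simp add: algebra_simps flip: exp_add)
  have cE: "continuous_on {a..b} E"
    using E by (meson DERIV_continuous continuous_on_eq_continuous_within)
  have "(LINT s:{a..b}|lborel. E s * g s)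
      = (LINT s:{a..b}|lborel. (E s * exp (- c * s)) * (exp (c * s) * g s))"
  proof (intro set_lebesgue_integral_cong allI impI)
    fix s
    have "(E s * exp (- c * s)) * (exp (c * s) * g s) = E s * (exp (- c * s) * exp (c * s)) * g s"
      by (simp only: mult_ac)
    then show "E s * g s = (E s * exp (- c * s)) * (exp (c * s) * g s)"
      by (simp flip: exp_add)
  qed simp
  also have "\<dots> = (E b * exp (- c * b)) * (LINT s:{a..b}|lborel. exp (c * s) * g s)
      - (LINT s:{a..b}|lborel. ((E' s - c * E s) * exp (- c * s)) * (LINT r:{a..s}|lborel. exp (c * r) * g r))"
  proof (rule set_integral_by_parts_indefinite[OF ab])
    show "set_integrable lborel {a..b} (\<lambda>s. exp (c * s) * g s)"
      by (intro set_integrable_continuous_mult_Icc g continuous_intros)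
    show "((\<lambda>s. E s * exp (- c * s)) has_real_derivative (E' s - c * E s) * exp (- c * s)) (at s within {a..b})"
      if "s \<in> {a..b}" for s
      by (auto intro!: derivative_eq_intros E[OF that] simp: algebra_simps)
    show "continuous_on {a..b} (\<lambda>s. (E' s - c * E s) * exp (- c * s))"
      by (intro continuous_intros E' cE)
  qed
  also have "\<dots> = E b * (LINT s:{a..b}|lborel. exp (- c * (b - s)) * g s)
      - (LINT s:{a..b}|lborel. (E' s - c * E s) * (LINT r:{a..s}|lborel. exp (- c * (s - r)) * g r))"
    unfolding exp_split by (simp add: mult_ac flip: set_integral_mult_right)
  finally show ?thesis .
qed

lemma continuous_on_exp_convolution_Icc:
  fixes g :: "real \<Rightarrow> real" and c :: real
  assumes g: "set_integrable lborel {a..b} g"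
  shows "continuous_on {a..b} (\<lambda>t. LINT s:{a..t}|lborel. exp (- c * (t - s)) * g s)"
proof -
  have "continuous_on {a..b} (\<lambda>t. exp (- c * t) * (LINT s:{a..t}|lborel. exp (c * s) * g s))"
    by (intro continuous_intros indefinite_set_integral_continuous set_integrable_continuous_mult_Icc g)
  moreover have "exp (- c * t) * (LINT s:{a..t}|lborel. exp (c * s) * g s)
      = (LINT s:{a..t}|lborel. exp (- c * (t - s)) * g s)" for t
  proof -
    have "exp (- c * (t - s)) = exp (- c * t) * exp (c * s)" for s
      by (simp add: algebra_simps flip: exp_add)
    then show ?thesis
      by (simp only: mult.assoc set_integral_mult_right)
  qed
  ultimately show ?thesis
    by simp
qed

lemma set_integrable_continuous_bound:
  fixes h k :: "real \<Rightarrow> real"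
  assumes "S \<in> sets borel" "continuous_on S h" "set_integrable lborel S k" "\<And>s. s \<in> S \<Longrightarrow> \<bar>h s\<bar> \<le> k s"
  shows "set_integrable lborel S h"
proof (rule set_integrable_bound[OF assms(3)])
  show "set_borel_measurable lborel S h"
    using set_measurable_continuous_on[OF assms(1,2)] by (simp add: set_borel_measurable_def)
  show "AE s in lborel. s \<in> S \<longrightarrow> norm (h s) \<le> norm (k s)"
    using assms(4) by (auto intro!: AE_I2 order_trans[OF _ abs_ge_self])
qed

lemma abs_set_integral_Icc_le_atLeast:
  fixes h :: "real \<Rightarrow> real"
  assumes h: "set_integrable lborel {a..} h"
  shows "\<bar>LINT s:{a..T}|lborel. h s\<bar> \<le> (LINT s:{a..}|lborel. \<bar>h s\<bar>)"
proof -
  have hT: "set_integrable lborel {a..T} h"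
    by (rule set_integrable_subset[OF h]) auto
  have restrict: "(\<lambda>s. indicator {a..} s *\<^sub>R (indicator {a..T} s * \<bar>h s\<bar>)) = (\<lambda>s. indicator {a..T} s *\<^sub>R \<bar>h s\<bar>)"
    by (auto simp: indicator_def)
  have "\<bar>LINT s:{a..T}|lborel. h s\<bar> \<le> (LINT s:{a..T}|lborel. \<bar>h s\<bar>)"
    using set_integral_norm_bound[OF hT] by simp
  also have "\<dots> = (LINT s:{a..}|lborel. indicator {a..T} s * \<bar>h s\<bar>)"
    unfolding set_lebesgue_integral_def restrict ..
  also have "\<dots> \<le> (LINT s:{a..}|lborel. \<bar>h s\<bar>)"
  proof (rule set_integral_mono)
    show "set_integrable lborel {a..} (\<lambda>s. indicator {a..T} s * \<bar>h s\<bar>)"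
      using set_integrable_abs[OF hT] unfolding set_integrable_def restrict .
    show "set_integrable lborel {a..} (\<lambda>s. \<bar>h s\<bar>)"
      using h by (rule set_integrable_abs)
  qed (simp add: indicator_def)
  finally show ?thesis .
qed

lemma continuous_on_atLeast_tendsto_bounded:
  fixes h :: "real \<Rightarrow> real"
  assumes h: "continuous_on {a..} h" and lim: "(h \<longlongrightarrow> l) at_top"
  obtains M where "\<And>t. t \<ge> a \<Longrightarrow> \<bar>h t\<bar> \<le> M"
proof -
  have "eventually (\<lambda>t. dist (h t) l < 1) at_top"
    using lim by (rule tendstoD) simp
  then obtain T where T: "\<And>t. t \<ge> T \<Longrightarrow> \<bar>h t - l\<bar> < 1"
    by (auto simp: eventually_at_top_linorder dist_real_def)
  have "continuous_on {a..T} h"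
    using h by (rule continuous_on_subset) auto
  then have "bounded (h ` {a..T})"
    by (intro compact_imp_bounded compact_continuous_image compact_Icc)
  then obtain C where C: "\<And>t. t \<in> {a..T} \<Longrightarrow> \<bar>h t\<bar> \<le> C"
    unfolding bounded_iff by fastforce
  have "\<bar>h t\<bar> \<le> max C (\<bar>l\<bar> + 1)" if "t \<ge> a" for t
  proof (cases "t \<le> T")
    case True
    then show ?thesis using C[of t] that by simp
  next
    case False
    then show ?thesis using T[of t] by linarith
  qed
  then show ?thesis
    by (rule that)
qed

lemma gronwall_Icc:
  fixes h \<beta> :: "real \<Rightarrow> real"
  assumes "a \<le> b" and h: "continuous_on {a..b} h" and \<beta>: "continuous_on {a..b} \<beta>"
    and \<beta>_nonneg: "\<And>s. s \<in> {a..b} \<Longrightarrow> \<beta> s \<ge> 0"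
    and ineq: "\<And>t. t \<in> {a..b} \<Longrightarrow> h t \<le> K + (LINT s:{a..t}|lborel. \<beta> s * h s)"
  shows "h b \<le> K * exp (LINT s:{a..b}|lborel. \<beta> s)"
proof -
  define R where "R t = K + (LINT s:{a..t}|lborel. \<beta> s * h s)" for t
  define B where "B t = (LINT s:{a..t}|lborel. \<beta> s)" for t
  have R: "(R has_real_derivative \<beta> t * h t) (at t within {a..b})" if "t \<in> {a..b}" for t
    unfolding R_def using set_integral_has_real_derivative[OF continuous_on_mult[OF \<beta> h] that]
    by (auto intro!: derivative_eq_intros)
  have B: "(B has_real_derivative \<beta> t) (at t within {a..b})" if "t \<in> {a..b}" for t
    unfolding B_def by (rule set_integral_has_real_derivative[OF \<beta> that])
  have "R b * exp (- B b) \<le> R a * exp (- B a)"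
  proof (rule DERIV_within_nonpos_imp_nonincreasing[OF \<open>a \<le> b\<close>])
    show "((\<lambda>t. R t * exp (- B t)) has_real_derivative \<beta> t * exp (- B t) * (h t - R t)) (at t within {a..b})"
      if "t \<in> {a..b}" for t
      by (auto intro!: derivative_eq_intros R[OF that] B[OF that] simp: algebra_simps)
    show "\<beta> t * exp (- B t) * (h t - R t) \<le> 0" if "t \<in> {a<..<b}" for t
    proof (rule mult_nonneg_nonpos)
      show "0 \<le> \<beta> t * exp (- B t)"
        using that \<beta>_nonneg[of t] by simp
      show "h t - R t \<le> 0"
        using that ineq[of t] by (simp add: R_def)
    qed
  qed
  moreover have "R a = K" "B a = 0"
    using interval_integral_Icc[of a a "\<lambda>s. \<beta> s * h s"] interval_integral_Icc[of a a \<beta>]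
    by (simp_all add: R_def B_def)
  ultimately have "R b \<le> K * exp (B b)"
    by (simp add: exp_minus field_simps)
  then show ?thesis
    using ineq[of b] \<open>a \<le> b\<close> by (simp add: R_def B_def)
qed

lemma set_integrable_atLeast_deriv_nonpos:
  fixes F f :: "real \<Rightarrow> real"
  assumes F: "\<And>t. t \<ge> a \<Longrightarrow> (F has_real_derivative f t) (at t within {a..})"
    and f: "continuous_on {a..} f" and f_nonpos: "\<And>t. t \<ge> a \<Longrightarrow> f t \<le> 0"
    and F_bdd: "\<And>t. t \<ge> a \<Longrightarrow> m \<le> F t"
  shows "set_integrable lborel {a..} f"
proof -
  have F_Icc: "(F has_real_derivative f t) (at t within {c..b})" if "a \<le> c" "t \<in> {c..b}" for t c b
    using that by (intro has_field_derivative_subset[OF F]) auto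
  have f_Icc: "continuous_on {a..b} f" for b
    by (rule continuous_on_subset[OF f]) auto
  have FTC: "(LINT t:{a..a + real i}|lborel. - f t) = F a - F (a + real i)" for i
    using set_integral_FTC_Icc[OF _ F_Icc[of a] f_Icc, of "a + real i"] set_integral_uminus[OF borel_integrable_atLeastAtMost'[OF f_Icc]]
    by simp
  have "decseq (\<lambda>i. F (a + real i))"
  proof (rule decseq_SucI)
    show "F (a + real (Suc i)) \<le> F (a + real i)" for i
      by (rule DERIV_within_nonpos_imp_nonincreasing[OF _ F_Icc[of "a + real i"]]) (auto intro: f_nonpos)
  qed
  moreover have "\<forall>i. m \<le> F (a + real i)"
    using F_bdd by simp
  ultimately obtain L where L: "(\<lambda>i. F (a + real i)) \<longlonglongrightarrow> L"
    using decseq_convergent by blast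
  have "set_integrable lborel (\<Union>i. {a..a + real i}) (\<lambda>t. - f t)"
  proof (rule pos_integrable_to_top)
    show "(\<lambda>i. LINT t:{a..a + real i}|lborel. - f t) \<longlonglongrightarrow> F a - L"
      unfolding FTC by (intro tendsto_intros L)
  qed (use f_nonpos in \<open>auto simp: mono_def intro!: borel_integrable_atLeastAtMost' continuous_intros f_Icc\<close>)
  moreover have "(\<Union>i. {a..a + real i}) = {a..}"
  proof (intro equalityI subsetI)
    fix t assume "t \<in> {a..}"
    moreover obtain i :: nat where "t - a \<le> real i"
      using real_arch_simple by blast
    ultimately show "t \<in> (\<Union>i. {a..a + real i})"
      by (auto simp: diff_le_eq add.commute)
  qed auto
  ultimately have "set_integrable lborel {a..} (\<lambda>t. -1 * - f t)"
    by (intro set_integrable_mult_right) simp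
  then show ?thesis
    by simp
qed

locale damped_oscillator =
  fixes \<omega> :: real and p p' f x x' :: "real \<Rightarrow> real"
  assumes \<omega>_pos: "\<omega> > 0"
    and p_deriv: "\<And>t. t \<ge> 0 \<Longrightarrow> (p has_real_derivative p' t) (at t within {0..})"
    and p'_cont: "continuous_on {0..} p'"
    and p_nonneg: "\<And>t. t \<ge> 0 \<Longrightarrow> p t \<ge> 0"
    and p'_nonpos: "\<And>t. t \<ge> 0 \<Longrightarrow> p' t \<le> 0"
    and p_sq_int: "set_integrable lborel {0..} (\<lambda>t. (p t)^2)"
    and f_loc: "\<And>t. t \<ge> 0 \<Longrightarrow> set_integrable lborel {0..t} f"
    and x_deriv: "\<And>t. t \<ge> 0 \<Longrightarrow> (x has_real_derivative x' t) (at t within {0..})"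
    and x'_integrable: "\<And>t. t \<ge> 0 \<Longrightarrow>
          set_integrable lborel {0..t} (\<lambda>s. f s - p s * x' s - \<omega>^2 * x s)"
    and x'_eq: "\<And>t. t \<ge> 0 \<Longrightarrow>
          x' t = x' 0 + (LINT s:{0..t}|lborel. f s - p s * x' s - \<omega>^2 * x s)"
    and x0: "x 0 = 0" and x'0: "x' 0 = 0"
begin

abbreviation A where "A \<equiv> Afun p"
abbreviation y1 where "y1 \<equiv> y1fun \<omega> f"
abbreviation y2 where "y2 \<equiv> y2fun \<omega> f"

definition q :: "real \<Rightarrow> real" where
  "q t = p t ^ 2 / 4 + p' t / 2"

lemma p_deriv_Icc: "t \<in> {0..T} \<Longrightarrow> (p has_real_derivative p' t) (at t within {0..T})"
  by (rule has_field_derivative_subset[OF p_deriv]) auto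

lemma p_cont: "continuous_on {0..} p"
  using p_deriv by (meson DERIV_continuous continuous_on_eq_continuous_within atLeast_iff)

lemma p_le: "t \<ge> 0 \<Longrightarrow> p t \<le> p 0"
  by (rule DERIV_within_nonpos_imp_nonincreasing[OF _ p_deriv_Icc]) (auto intro: p'_nonpos)

lemma p'_integrable: "set_integrable lborel {0..} p'"
  by (rule set_integrable_atLeast_deriv_nonpos[OF p_deriv p'_cont p'_nonpos p_nonneg]) auto

lemma q_cont: "continuous_on {0..} q"
  unfolding q_def by (intro continuous_intros p_cont p'_cont) auto

lemma q_integrable: "set_integrable lborel {0..} q"
proof (rule set_integrable_continuous_bound[OF _ q_cont])
  show "set_integrable lborel {0..} (\<lambda>t. p t ^ 2 + \<bar>p' t\<bar>)"
    by (intro set_integral_add(1) p_sq_int set_integrable_abs p'_integrable)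
  show "\<bar>q t\<bar> \<le> p t ^ 2 + \<bar>p' t\<bar>" for t
    unfolding q_def abs_le_iff
    using zero_le_power2[of "p t"] abs_ge_self[of "p' t"] abs_ge_minus_self[of "p' t"]
    by (intro conjI) linarith+
qed simp

lemma A_eq: "A t = exp (LINT s:{0..t}|lborel. p s / 2)"
  by (simp add: Afun_def)

lemma A_pos: "A t > 0"
  by (simp add: A_eq)

lemma A_deriv: "t \<in> {0..T} \<Longrightarrow> (A has_real_derivative A t * (p t / 2)) (at t within {0..T})"
  unfolding A_eq
  by (rule derivative_eq_intros set_integral_has_real_derivative continuous_intros
        continuous_on_subset[OF p_cont] | simp)+

lemma A_cont: "continuous_on {0..} A"
  using A_deriv by (intro continuous_on_atLeast_of_Icc)
    (meson DERIV_continuous continuous_on_eq_continuous_within)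

lemma x_cont: "continuous_on {0..} x"
  using x_deriv by (meson DERIV_continuous continuous_on_eq_continuous_within atLeast_iff)

lemma x_deriv_Icc: "t \<in> {0..T} \<Longrightarrow> (x has_real_derivative x' t) (at t within {0..T})"
  by (rule has_field_derivative_subset[OF x_deriv]) auto

lemma x'_indefinite: "t \<ge> 0 \<Longrightarrow> x' t = (LINT s:{0..t}|lborel. f s - p s * x' s - \<omega>^2 * x s)"
  using x'_eq x'0 by simp

lemma x'_cont: "continuous_on {0..} x'"
proof (rule continuous_on_atLeast_of_Icc)
  fix T :: real assume "T \<ge> 0"
  show "continuous_on {0..T} x'"
    using indefinite_set_integral_continuous[OF x'_integrable[OF \<open>T \<ge> 0\<close>]]
    by (rule continuous_on_eq) (simp add: x'_indefinite)
qed

lemma y1_cont: "continuous_on {0..} y1"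
  unfolding y1fun_def
  by (intro continuous_on_atLeast_of_Icc continuous_on_exp_convolution_Icc f_loc)

lemma y2_cont: "continuous_on {0..} y2"
  unfolding y2fun_def
  by (intro continuous_on_atLeast_of_Icc continuous_on_exp_convolution_Icc borel_integrable_atLeastAtMost'
        continuous_on_subset[OF y1_cont]) auto

lemma Icc_cont:
  "continuous_on {0..t} A" "continuous_on {0..t} p" "continuous_on {0..t} p'" "continuous_on {0..t} q"
  "continuous_on {0..t} x" "continuous_on {0..t} x'" "continuous_on {0..t} y1" "continuous_on {0..t} y2"
  by (auto intro: continuous_on_subset[OF A_cont] continuous_on_subset[OF p_cont]
      continuous_on_subset[OF p'_cont] continuous_on_subset[OF q_cont] continuous_on_subset[OF x_cont]
      continuous_on_subset[OF x'_cont] continuous_on_subset[OF y1_cont] continuous_on_subset[OF y2_cont])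

text \<open>With \<open>z = A x\<close>, \<open>wronskian u u'\<close> is \<open>u z' - u' z\<close>.\<close>

definition wronskian :: "(real \<Rightarrow> real) \<Rightarrow> (real \<Rightarrow> real) \<Rightarrow> real \<Rightarrow> real" where
  "wronskian u u' t = A t * (u t * x' t + (p t / 2 * u t - u' t) * x t)"

text \<open>
  \<open>kernel1 u u' = (d/dt - \<omega>\<^sup>2) (A u)\<close> and \<open>kernel2 u u' = (d/dt - \<omega>\<^sup>2)\<^sup>2 (A u)\<close>, using
  \<open>A' = A p / 2\<close> and \<open>u'' = -\<omega>\<^sup>2 u\<close>.
\<close>

definition kernel1 :: "(real \<Rightarrow> real) \<Rightarrow> (real \<Rightarrow> real) \<Rightarrow> real \<Rightarrow> real" where
  "kernel1 u u' t = A t * ((p t / 2 - \<omega>^2) * u t + u' t)"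

definition kernel2 :: "(real \<Rightarrow> real) \<Rightarrow> (real \<Rightarrow> real) \<Rightarrow> real \<Rightarrow> real" where
  "kernel2 u u' t = A t * ((q t - \<omega>^2 * p t - \<omega>^2 + \<omega>^4) * u t + (p t - 2 * \<omega>^2) * u' t)"

definition remainder :: "(real \<Rightarrow> real) \<Rightarrow> (real \<Rightarrow> real) \<Rightarrow> real \<Rightarrow> real" where
  "remainder u u' t = - kernel1 u u' t * y2 t + (LINT s:{0..t}|lborel. kernel2 u u' s * y2 s)
     + (LINT s:{0..t}|lborel. u s * q s * (A s * x s))"

definition unit_harmonic :: "(real \<Rightarrow> real) \<Rightarrow> (real \<Rightarrow> real) \<Rightarrow> bool" where
  "unit_harmonic u u' \<longleftrightarrow> (\<forall>t. (u has_real_derivative u' t) (at t)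
     \<and> (u' has_real_derivative - (\<omega>^2 * u t)) (at t) \<and> \<bar>u t\<bar> \<le> 1 \<and> \<bar>u' t\<bar> \<le> \<omega>)"

lemma unit_harmonic_cos: "unit_harmonic (\<lambda>s. cos (\<omega> * s)) (\<lambda>s. - (\<omega> * sin (\<omega> * s)))"
  unfolding unit_harmonic_def using \<omega>_pos
  by (auto intro!: derivative_eq_intros simp: power2_eq_square abs_mult mult_left_le)

lemma unit_harmonic_sin: "unit_harmonic (\<lambda>s. sin (\<omega> * s)) (\<lambda>s. \<omega> * cos (\<omega> * s))"
  unfolding unit_harmonic_def using \<omega>_pos
  by (auto intro!: derivative_eq_intros simp: power2_eq_square abs_mult mult_left_le)

context
  fixes u u' :: "real \<Rightarrow> real"
  assumes harmonic: "unit_harmonic u u'"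
begin

lemma u_deriv: "(u has_real_derivative u' t) (at t)"
  and u'_deriv: "(u' has_real_derivative - (\<omega>^2 * u t)) (at t)"
  and u_bound: "\<bar>u t\<bar> \<le> 1" and u'_bound: "\<bar>u' t\<bar> \<le> \<omega>"
  using harmonic by (auto simp: unit_harmonic_def)

lemma u_cont: "continuous_on S u" and u'_cont: "continuous_on S u'"
  using u_deriv u'_deriv by (meson DERIV_isCont continuous_at_imp_continuous_on)+

lemma Au_deriv:
  "t \<in> {0..T} \<Longrightarrow> ((\<lambda>s. A s * u s) has_real_derivative A t * (p t / 2 * u t + u' t)) (at t within {0..T})"
  by (auto intro!: derivative_eq_intros A_deriv u_deriv[THEN has_field_derivative_at_within]
      simp: algebra_simps)

lemma kernel1_deriv:
  "t \<in> {0..T} \<Longrightarrow> (kernel1 u u' has_real_derivative kernel2 u u' t + \<omega>^2 * kernel1 u u' t) (at t within {0..T})"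
  unfolding kernel1_def[abs_def]
  by (auto intro!: derivative_eq_intros A_deriv p_deriv_Icc u_deriv[THEN has_field_derivative_at_within]
      u'_deriv[THEN has_field_derivative_at_within])
    (simp add: kernel2_def kernel1_def q_def field_simps power2_eq_square power4_eq_xxxx)

lemma Au_x'_by_parts:
  assumes t: "t \<ge> 0"
  shows "A t * u t * x' t = (LINT s:{0..t}|lborel. A s * u s * (f s - p s * x' s - \<omega>^2 * x s))
    + (LINT s:{0..t}|lborel. A s * (p s / 2 * u s + u' s) * x' s)"
proof -
  have "(LINT s:{0..t}|lborel. A s * u s * (f s - p s * x' s - \<omega>^2 * x s))
      = A t * u t * (LINT s:{0..t}|lborel. f s - p s * x' s - \<omega>^2 * x s)
      - (LINT s:{0..t}|lborel. A s * (p s / 2 * u s + u' s) * (LINT r:{0..s}|lborel. f r - p r * x' r - \<omega>^2 * x r))"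
    by (rule set_integral_by_parts_indefinite[OF t x'_integrable[OF t] Au_deriv])
      (auto intro!: continuous_intros Icc_cont u_cont u'_cont)
  moreover have "(LINT s:{0..t}|lborel. A s * (p s / 2 * u s + u' s) * (LINT r:{0..s}|lborel. f r - p r * x' r - \<omega>^2 * x r))
      = (LINT s:{0..t}|lborel. A s * (p s / 2 * u s + u' s) * x' s)"
    by (intro set_lebesgue_integral_cong allI impI) (simp_all add: x'_indefinite)
  ultimately show ?thesis
    by (simp add: x'_indefinite[OF t])
qed

lemma Ax_product_rule:
  assumes t: "t \<ge> 0"
  shows "A t * (p t / 2 * u t - u' t) * x t
    = (LINT s:{0..t}|lborel. A s * ((q s + \<omega>^2) * u s) * x s + A s * (p s / 2 * u s - u' s) * x' s)"
proof -
  define F where "F s = A s * (p s / 2 * u s - u' s)" for s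
  define F' where "F' s = A s * ((q s + \<omega>^2) * u s)" for s
  have F_deriv: "(F has_real_derivative F' s) (at s within {0..t})" if "s \<in> {0..t}" for s
    unfolding F_def[abs_def]
    by (auto intro!: derivative_eq_intros A_deriv[OF that] p_deriv_Icc[OF that]
        u_deriv[THEN has_field_derivative_at_within] u'_deriv[THEN has_field_derivative_at_within])
      (simp add: F'_def q_def field_simps power2_eq_square)
  have F_cont: "continuous_on {0..t} F" "continuous_on {0..t} F'"
    unfolding F_def F'_def by (intro continuous_intros Icc_cont u_cont u'_cont; simp)+
  have "(LINT s:{0..t}|lborel. F' s * x s + F s * x' s) = F t * x t - F 0 * x 0"
    by (rule set_integral_FTC_Icc[OF t])
      (auto intro!: derivative_eq_intros F_deriv x_deriv_Icc continuous_intros Icc_cont F_cont)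
  then show ?thesis
    by (simp add: F_def F'_def x0)
qed

lemma wronskian_eq_integral:
  assumes t: "t \<ge> 0"
  shows "wronskian u u' t
    = (LINT s:{0..t}|lborel. A s * u s * f s) + (LINT s:{0..t}|lborel. u s * q s * (A s * x s))"
proof -
  note cont_intros = continuous_intros Icc_cont u_cont u'_cont
  have Aug_int: "set_integrable lborel {0..t} (\<lambda>s. A s * u s * (f s - p s * x' s - \<omega>^2 * x s))"
    by (intro set_integrable_continuous_mult_Icc x'_integrable[OF t] cont_intros)
  have Ax'_int: "set_integrable lborel {0..t} (\<lambda>s. A s * (p s / 2 * u s + u' s) * x' s)"
    by (intro borel_integrable_atLeastAtMost' cont_intros) auto
  have Ax_int: "set_integrable lborel {0..t}
      (\<lambda>s. A s * ((q s + \<omega>^2) * u s) * x s + A s * (p s / 2 * u s - u' s) * x' s)"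
    by (intro borel_integrable_atLeastAtMost' cont_intros) auto
  have Auf_int: "set_integrable lborel {0..t} (\<lambda>s. A s * u s * f s)"
    by (intro set_integrable_continuous_mult_Icc f_loc[OF t] cont_intros)
  have uqAx_int: "set_integrable lborel {0..t} (\<lambda>s. u s * q s * (A s * x s))"
    by (intro borel_integrable_atLeastAtMost' cont_intros)
  have "wronskian u u' t = A t * u t * x' t + A t * (p t / 2 * u t - u' t) * x t"
    by (simp add: wronskian_def algebra_simps)
  also have "\<dots> = (LINT s:{0..t}|lborel. A s * u s * (f s - p s * x' s - \<omega>^2 * x s)
      + A s * (p s / 2 * u s + u' s) * x' s
      + (A s * ((q s + \<omega>^2) * u s) * x s + A s * (p s / 2 * u s - u' s) * x' s))"
    unfolding Au_x'_by_parts[OF t] Ax_product_rule[OF t]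
    by (simp only: set_integral_add(2)[OF set_integral_add(1)[OF Aug_int Ax'_int] Ax_int]
        set_integral_add(2)[OF Aug_int Ax'_int])
  also have "\<dots> = (LINT s:{0..t}|lborel. A s * u s * f s + u s * q s * (A s * x s))"
    by (intro set_lebesgue_integral_cong allI impI) (simp_all add: algebra_simps)
  also have "\<dots> = (LINT s:{0..t}|lborel. A s * u s * f s) + (LINT s:{0..t}|lborel. u s * q s * (A s * x s))"
    by (rule set_integral_add(2)[OF Auf_int uqAx_int])
  finally show ?thesis .
qed

lemma forcing_integral:
  assumes t: "t \<ge> 0"
  shows "(LINT s:{0..t}|lborel. A s * u s * f s)
    = A t * u t * y1 t - kernel1 u u' t * y2 t + (LINT s:{0..t}|lborel. kernel2 u u' s * y2 s)"
proof -
  note cont_intros = continuous_intros Icc_cont u_cont u'_cont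
  have "(LINT s:{0..t}|lborel. A s * u s * f s) = A t * u t * y1 t
      - (LINT s:{0..t}|lborel. (A s * (p s / 2 * u s + u' s) - \<omega>^2 * (A s * u s)) * y1 s)"
    unfolding y1fun_def
    by (rule set_integral_by_parts_resolvent[OF t f_loc[OF t] Au_deriv]) (auto intro!: cont_intros)
  also have "(LINT s:{0..t}|lborel. (A s * (p s / 2 * u s + u' s) - \<omega>^2 * (A s * u s)) * y1 s)
      = (LINT s:{0..t}|lborel. kernel1 u u' s * y1 s)"
    by (simp add: kernel1_def algebra_simps)
  also have "\<dots> = kernel1 u u' t * y2 t
      - (LINT s:{0..t}|lborel. (kernel2 u u' s + \<omega>^2 * kernel1 u u' s - \<omega>^2 * kernel1 u u' s) * y2 s)"
    unfolding y2fun_def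
  proof (rule set_integral_by_parts_resolvent[OF t _ kernel1_deriv])
    show "set_integrable lborel {0..t} y1"
      by (intro borel_integrable_atLeastAtMost' Icc_cont)
    show "continuous_on {0..t} (\<lambda>s. kernel2 u u' s + \<omega>^2 * kernel1 u u' s)"
      unfolding kernel1_def kernel2_def by (intro cont_intros) auto
  qed
  finally show ?thesis
    by simp
qed

lemma wronskian_eq_remainder: "t \<ge> 0 \<Longrightarrow> wronskian u u' t = A t * u t * y1 t + remainder u u' t"
  by (simp add: wronskian_eq_integral forcing_integral remainder_def)

lemma harmonic_combination_bound: "\<bar>a * u t + b * u' t\<bar> \<le> \<bar>a\<bar> + \<bar>b\<bar> * \<omega>"
proof -
  have "\<bar>a * u t\<bar> \<le> \<bar>a\<bar>"
    using u_bound[of t] by (simp add: abs_mult mult_left_le)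
  moreover have "\<bar>b * u' t\<bar> \<le> \<bar>b\<bar> * \<omega>"
    unfolding abs_mult by (rule mult_left_mono[OF u'_bound]) simp
  ultimately show ?thesis
    using abs_triangle_ineq[of "a * u t" "b * u' t"] by linarith
qed

lemma kernel1_bound:
  assumes "t \<ge> 0"
  shows "\<bar>kernel1 u u' t\<bar> \<le> (p 0 / 2 + \<omega>^2 + \<omega>) * A t"
proof -
  have "\<bar>kernel1 u u' t\<bar> = A t * \<bar>(p t / 2 - \<omega>^2) * u t + 1 * u' t\<bar>"
    using A_pos[of t] by (simp add: kernel1_def abs_mult)
  also have "\<dots> \<le> A t * (\<bar>p t / 2 - \<omega>^2\<bar> + \<bar>1\<bar> * \<omega>)"
    using A_pos[of t] by (intro mult_left_mono harmonic_combination_bound) simp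
  also have "\<dots> \<le> A t * (p 0 / 2 + \<omega>^2 + \<omega>)"
  proof -
    have "\<bar>p t / 2 - \<omega>^2\<bar> \<le> p 0 / 2 + \<omega>^2"
      using p_nonneg[OF assms] p_le[OF assms] zero_le_power2[of \<omega>]
      unfolding abs_le_iff by (intro conjI) linarith+
    then show ?thesis
      using A_pos[of t] by (intro mult_left_mono) auto
  qed
  finally show ?thesis
    by (simp add: mult.commute)
qed

lemma kernel2_bound:
  assumes "t \<ge> 0"
  shows "\<bar>kernel2 u u' t\<bar> \<le> (\<bar>q t\<bar> + \<omega>^2 * p 0 + \<omega>^2 + \<omega>^4 + \<omega> * (p 0 + 2 * \<omega>^2)) * A t"
proof -
  have "\<bar>kernel2 u u' t\<bar>
      = A t * \<bar>(q t - \<omega>^2 * p t - \<omega>^2 + \<omega>^4) * u t + (p t - 2 * \<omega>^2) * u' t\<bar>"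
    using A_pos[of t] by (simp add: kernel2_def abs_mult)
  also have "\<dots> \<le> A t * (\<bar>q t - \<omega>^2 * p t - \<omega>^2 + \<omega>^4\<bar> + \<bar>p t - 2 * \<omega>^2\<bar> * \<omega>)"
    using A_pos[of t] by (intro mult_left_mono harmonic_combination_bound) simp
  also have "\<dots> \<le> A t * (\<bar>q t\<bar> + \<omega>^2 * p 0 + \<omega>^2 + \<omega>^4 + \<omega> * (p 0 + 2 * \<omega>^2))"
  proof (intro mult_left_mono add_mono)
    have "\<omega>^2 * p t \<le> \<omega>^2 * p 0"
      using p_le[OF assms] by (simp add: mult_left_mono)
    moreover have "0 \<le> \<omega>^2 * p t" "0 \<le> \<omega>^4"
      using p_nonneg[OF assms] by simp_all
    ultimately show "\<bar>q t - \<omega>^2 * p t - \<omega>^2 + \<omega>^4\<bar> \<le> \<bar>q t\<bar> + \<omega>^2 * p 0 + \<omega>^2 + \<omega>^4"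
      using zero_le_power2[of \<omega>] abs_ge_self[of "q t"] abs_ge_minus_self[of "q t"]
      unfolding abs_le_iff by (intro conjI) linarith+
    show "\<bar>p t - 2 * \<omega>^2\<bar> * \<omega> \<le> \<omega> * (p 0 + 2 * \<omega>^2)"
    proof (subst mult.commute, intro mult_left_mono)
      show "\<bar>p t - 2 * \<omega>^2\<bar> \<le> p 0 + 2 * \<omega>^2"
        using p_nonneg[OF assms] p_le[OF assms] zero_le_power2[of \<omega>]
        unfolding abs_le_iff by (intro conjI) linarith+
    qed (use \<omega>_pos in simp)
  qed (use A_pos[of t] in auto)
  finally show ?thesis
    by (simp add: mult.commute)
qed

end

abbreviation remainder_cos where
  "remainder_cos \<equiv> remainder (\<lambda>s. cos (\<omega> * s)) (\<lambda>s. - (\<omega> * sin (\<omega> * s)))"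

abbreviation remainder_sin where
  "remainder_sin \<equiv> remainder (\<lambda>s. sin (\<omega> * s)) (\<lambda>s. \<omega> * cos (\<omega> * s))"

lemma scaled_solution_eq_remainders:
  assumes "t \<ge> 0"
  shows "\<omega> * (A t * x t) = sin (\<omega> * t) * remainder_cos t - cos (\<omega> * t) * remainder_sin t"
proof -
  define Wc where "Wc = wronskian (\<lambda>s. cos (\<omega> * s)) (\<lambda>s. - (\<omega> * sin (\<omega> * s))) t"
  define Ws where "Ws = wronskian (\<lambda>s. sin (\<omega> * s)) (\<lambda>s. \<omega> * cos (\<omega> * s)) t"
  have "Wc = A t * cos (\<omega> * t) * y1 t + remainder_cos t"
    unfolding Wc_def by (rule wronskian_eq_remainder[OF unit_harmonic_cos assms])
  moreover have "Ws = A t * sin (\<omega> * t) * y1 t + remainder_sin t"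
    unfolding Ws_def by (rule wronskian_eq_remainder[OF unit_harmonic_sin assms])
  moreover have "sin (\<omega> * t) * Wc - cos (\<omega> * t) * Ws
      = \<omega> * (A t * x t) * (cos (\<omega> * t) * cos (\<omega> * t) + sin (\<omega> * t) * sin (\<omega> * t))"
    by (simp add: Wc_def Ws_def wronskian_def algebra_simps del: sin_cos_squared_add3)
  then have "sin (\<omega> * t) * Wc - cos (\<omega> * t) * Ws = \<omega> * (A t * x t)"
    by (simp only: sin_cos_squared_add3 mult_1_right)
  ultimately show ?thesis
    by (simp add: algebra_simps)
qed

end

locale damped_oscillator_small_forcing = damped_oscillator +
  assumes y2_small: "y2fun \<omega> f \<in> o[at_top](\<lambda>t. 1 / Afun p t)"
    and Ay2_integrable: "set_integrable lborel {0..} (\<lambda>t. Afun p t * \<bar>y2fun \<omega> f t\<bar>)"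
begin

lemma Ay2_tendsto: "((\<lambda>t. A t * y2 t) \<longlongrightarrow> 0) at_top"
  using smalloD_tendsto[OF y2_small] by (simp add: mult.commute)

lemma Ay2_bounded:
  obtains M where "\<And>t. t \<ge> 0 \<Longrightarrow> A t * \<bar>y2 t\<bar> \<le> M"
proof -
  have "continuous_on {0..} (\<lambda>t. A t * y2 t)"
    by (intro continuous_intros A_cont y2_cont)
  then obtain M where M: "\<And>t. t \<ge> 0 \<Longrightarrow> \<bar>A t * y2 t\<bar> \<le> M"
    using continuous_on_atLeast_tendsto_bounded[OF _ Ay2_tendsto] by blast
  have "A t * \<bar>y2 t\<bar> \<le> M" if "t \<ge> 0" for t
    using M[OF that] A_pos[of t] by (simp add: abs_mult)
  then show ?thesis
    by (rule that)
qed

context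
  fixes u u' :: "real \<Rightarrow> real"
  assumes harmonic: "unit_harmonic u u'"
begin

lemma kernel2_y2_integrable: "set_integrable lborel {0..} (\<lambda>s. kernel2 u u' s * y2 s)"
proof -
  obtain M where M: "\<And>t. t \<ge> 0 \<Longrightarrow> A t * \<bar>y2 t\<bar> \<le> M"
    using Ay2_bounded by blast
  define C where "C = \<omega>^2 * p 0 + \<omega>^2 + \<omega>^4 + \<omega> * (p 0 + 2 * \<omega>^2)"
  show ?thesis
  proof (rule set_integrable_continuous_bound)
    show "continuous_on {0..} (\<lambda>s. kernel2 u u' s * y2 s)"
      unfolding kernel2_def
      by (intro continuous_intros A_cont q_cont p_cont y2_cont u_cont[OF harmonic] u'_cont[OF harmonic])
    show "set_integrable lborel {0..} (\<lambda>s. M * \<bar>q s\<bar> + C * (A s * \<bar>y2 s\<bar>))"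
      by (intro set_integral_add(1) set_integrable_mult_right set_integrable_abs q_integrable Ay2_integrable)
    show "\<bar>kernel2 u u' s * y2 s\<bar> \<le> M * \<bar>q s\<bar> + C * (A s * \<bar>y2 s\<bar>)" if "s \<in> {0..}" for s
    proof -
      have "\<bar>kernel2 u u' s * y2 s\<bar> \<le> (\<bar>q s\<bar> + C) * A s * \<bar>y2 s\<bar>"
        using kernel2_bound[OF harmonic, of s] that unfolding C_def abs_mult
        by (intro mult_right_mono) (auto simp: add.assoc)
      also have "\<dots> = \<bar>q s\<bar> * (A s * \<bar>y2 s\<bar>) + C * (A s * \<bar>y2 s\<bar>)"
        by (simp add: algebra_simps)
      also have "\<dots> \<le> M * \<bar>q s\<bar> + C * (A s * \<bar>y2 s\<bar>)"
      proof -
        have "\<bar>q s\<bar> * (A s * \<bar>y2 s\<bar>) \<le> \<bar>q s\<bar> * M"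
          using M[of s] that by (intro mult_left_mono) auto
        then show ?thesis
          by (simp add: mult.commute)
      qed
      finally show ?thesis .
    qed
  qed simp
qed

lemma kernel1_y2_tendsto: "((\<lambda>t. kernel1 u u' t * y2 t) \<longlongrightarrow> 0) at_top"
proof (rule Lim_null_comparison)
  show "\<forall>\<^sub>F t in at_top. norm (kernel1 u u' t * y2 t) \<le> (p 0 / 2 + \<omega>^2 + \<omega>) * \<bar>A t * y2 t\<bar>"
    using eventually_ge_at_top[of 0]
  proof eventually_elim
    case (elim t)
    then show ?case
      using mult_right_mono[OF kernel1_bound[OF harmonic elim] abs_ge_zero[of "y2 t"]] A_pos[of t]
      by (simp add: abs_mult mult.assoc)
  qed
  show "((\<lambda>t. (p 0 / 2 + \<omega>^2 + \<omega>) * \<bar>A t * y2 t\<bar>) \<longlongrightarrow> 0) at_top"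
    using tendsto_mult_right_zero[OF tendsto_rabs_zero[OF Ay2_tendsto]] .
qed

lemma remainder_bound:
  obtains C where "\<And>t. t \<ge> 0 \<Longrightarrow> \<bar>remainder u u' t\<bar> \<le> C + (LINT s:{0..t}|lborel. \<bar>q s\<bar> * \<bar>A s * x s\<bar>)"
proof -
  obtain M where M: "\<And>t. t \<ge> 0 \<Longrightarrow> A t * \<bar>y2 t\<bar> \<le> M"
    using Ay2_bounded by blast
  define C where "C = (p 0 / 2 + \<omega>^2 + \<omega>) * M + (LINT s:{0..}|lborel. \<bar>kernel2 u u' s * y2 s\<bar>)"
  have "\<bar>remainder u u' t\<bar> \<le> C + (LINT s:{0..t}|lborel. \<bar>q s\<bar> * \<bar>A s * x s\<bar>)" if t: "t \<ge> 0" for t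
  proof -
    note cont_intros = continuous_intros Icc_cont u_cont[OF harmonic]
    have "\<bar>kernel1 u u' t * y2 t\<bar> \<le> (p 0 / 2 + \<omega>^2 + \<omega>) * (A t * \<bar>y2 t\<bar>)"
      using mult_right_mono[OF kernel1_bound[OF harmonic t] abs_ge_zero[of "y2 t"]]
      by (simp add: abs_mult mult.assoc)
    also have "\<dots> \<le> (p 0 / 2 + \<omega>^2 + \<omega>) * M"
      using M[OF t] p_nonneg[of 0] \<omega>_pos by (intro mult_left_mono) auto
    finally have k1: "\<bar>kernel1 u u' t * y2 t\<bar> \<le> (p 0 / 2 + \<omega>^2 + \<omega>) * M" .
    have k2: "\<bar>LINT s:{0..t}|lborel. kernel2 u u' s * y2 s\<bar> \<le> (LINT s:{0..}|lborel. \<bar>kernel2 u u' s * y2 s\<bar>)"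
      by (rule abs_set_integral_Icc_le_atLeast[OF kernel2_y2_integrable])
    have "\<bar>LINT s:{0..t}|lborel. u s * q s * (A s * x s)\<bar> \<le> (LINT s:{0..t}|lborel. \<bar>u s * q s * (A s * x s)\<bar>)"
      using set_integral_norm_bound[of lborel "{0..t}" "\<lambda>s. u s * q s * (A s * x s)"]
      by (simp add: borel_integrable_atLeastAtMost' cont_intros)
    also have "\<dots> \<le> (LINT s:{0..t}|lborel. \<bar>q s\<bar> * \<bar>A s * x s\<bar>)"
    proof (rule set_integral_mono)
      show "\<bar>u s * q s * (A s * x s)\<bar> \<le> \<bar>q s\<bar> * \<bar>A s * x s\<bar>" for s
        using u_bound[OF harmonic, of s] by (simp add: abs_mult mult_left_le_one_le mult.assoc)
    qed (intro borel_integrable_atLeastAtMost' cont_intros)+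
    finally have ux: "\<bar>LINT s:{0..t}|lborel. u s * q s * (A s * x s)\<bar> \<le> (LINT s:{0..t}|lborel. \<bar>q s\<bar> * \<bar>A s * x s\<bar>)" .
    show ?thesis
      using k1 k2 ux unfolding remainder_def C_def by linarith
  qed
  then show ?thesis
    by (rule that)
qed

end

lemma scaled_solution_integral_inequality:
  obtains K where "\<And>t. t \<ge> 0 \<Longrightarrow> \<bar>A t * x t\<bar> \<le> K + (LINT s:{0..t}|lborel. 2 / \<omega> * \<bar>q s\<bar> * \<bar>A s * x s\<bar>)"
proof -
  obtain Cc where Cc: "\<And>t. t \<ge> 0 \<Longrightarrow> \<bar>remainder_cos t\<bar> \<le> Cc + (LINT s:{0..t}|lborel. \<bar>q s\<bar> * \<bar>A s * x s\<bar>)"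
    using remainder_bound[OF unit_harmonic_cos] by blast
  obtain Cs where Cs: "\<And>t. t \<ge> 0 \<Longrightarrow> \<bar>remainder_sin t\<bar> \<le> Cs + (LINT s:{0..t}|lborel. \<bar>q s\<bar> * \<bar>A s * x s\<bar>)"
    using remainder_bound[OF unit_harmonic_sin] by blast
  have "\<bar>A t * x t\<bar> \<le> (Cc + Cs) / \<omega> + (LINT s:{0..t}|lborel. 2 / \<omega> * \<bar>q s\<bar> * \<bar>A s * x s\<bar>)"
    if t: "t \<ge> 0" for t
  proof -
    have "\<omega> * \<bar>A t * x t\<bar> = \<bar>sin (\<omega> * t) * remainder_cos t - cos (\<omega> * t) * remainder_sin t\<bar>"
      using \<omega>_pos by (simp add: abs_mult flip: scaled_solution_eq_remainders[OF t])
    also have "\<dots> \<le> \<bar>remainder_cos t\<bar> + \<bar>remainder_sin t\<bar>"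
      by (rule order_trans[OF abs_triangle_ineq4 add_mono]) (simp_all add: abs_mult mult_left_le_one_le)
    also have "\<dots> \<le> Cc + Cs + 2 * (LINT s:{0..t}|lborel. \<bar>q s\<bar> * \<bar>A s * x s\<bar>)"
      using Cc[OF t] Cs[OF t] by linarith
    also have "\<dots> = \<omega> * ((Cc + Cs) / \<omega> + (LINT s:{0..t}|lborel. 2 / \<omega> * \<bar>q s\<bar> * \<bar>A s * x s\<bar>))"
      using \<omega>_pos by (simp add: mult.assoc field_simps)
    finally show ?thesis
      using \<omega>_pos by simp
  qed
  then show ?thesis
    by (rule that)
qed

lemma scaled_solution_bounded:
  obtains B where "\<And>t. t \<ge> 0 \<Longrightarrow> \<bar>A t * x t\<bar> \<le> B"
proof -
  obtain K where K: "\<And>t. t \<ge> 0 \<Longrightarrow> \<bar>A t * x t\<bar> \<le> K + (LINT s:{0..t}|lborel. 2 / \<omega> * \<bar>q s\<bar> * \<bar>A s * x s\<bar>)"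
    using scaled_solution_integral_inequality by blast
  have \<beta>_int: "set_integrable lborel {0..} (\<lambda>s. 2 / \<omega> * \<bar>q s\<bar>)"
    by (intro set_integrable_mult_right set_integrable_abs q_integrable)
  have "\<bar>A t * x t\<bar> \<le> \<bar>K\<bar> * exp (LINT s:{0..}|lborel. \<bar>2 / \<omega> * \<bar>q s\<bar>\<bar>)" if t: "t \<ge> 0" for t
  proof -
    have "\<bar>A t * x t\<bar> \<le> K * exp (LINT s:{0..t}|lborel. 2 / \<omega> * \<bar>q s\<bar>)"
      using t \<omega>_pos
      by (intro gronwall_Icc K) (auto intro!: continuous_intros Icc_cont)
    also have "\<dots> \<le> \<bar>K\<bar> * exp (LINT s:{0..}|lborel. \<bar>2 / \<omega> * \<bar>q s\<bar>\<bar>)"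
    proof (rule mult_mono)
      show "exp (LINT s:{0..t}|lborel. 2 / \<omega> * \<bar>q s\<bar>) \<le> exp (LINT s:{0..}|lborel. \<bar>2 / \<omega> * \<bar>q s\<bar>\<bar>)"
        using order_trans[OF abs_ge_self abs_set_integral_Icc_le_atLeast[OF \<beta>_int, of t]]
        by (simp only: exp_le_cancel_iff)
    qed simp_all
    finally show ?thesis .
  qed
  then show ?thesis
    by (rule that)
qed

context
  fixes u u' :: "real \<Rightarrow> real"
  assumes harmonic: "unit_harmonic u u'"
begin

lemma uqAx_integrable: "set_integrable lborel {0..} (\<lambda>s. u s * q s * (A s * x s))"
proof -
  obtain B where B: "\<And>t. t \<ge> 0 \<Longrightarrow> \<bar>A t * x t\<bar> \<le> B"
    using scaled_solution_bounded by blast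
  show ?thesis
  proof (rule set_integrable_continuous_bound)
    show "continuous_on {0..} (\<lambda>s. u s * q s * (A s * x s))"
      by (intro continuous_intros u_cont[OF harmonic] q_cont A_cont x_cont)
    show "set_integrable lborel {0..} (\<lambda>s. B * \<bar>q s\<bar>)"
      by (intro set_integrable_mult_right set_integrable_abs q_integrable)
    show "\<bar>u s * q s * (A s * x s)\<bar> \<le> B * \<bar>q s\<bar>" if "s \<in> {0..}" for s
    proof -
      have "\<bar>u s * q s * (A s * x s)\<bar> \<le> \<bar>q s\<bar> * \<bar>A s * x s\<bar>"
        using u_bound[OF harmonic, of s] by (simp add: abs_mult mult_left_le_one_le mult.assoc)
      also have "\<dots> \<le> \<bar>q s\<bar> * B"
        using B[of s] that by (intro mult_left_mono) auto
      finally show ?thesis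
        by (simp add: mult.commute)
    qed
  qed simp
qed

lemma remainder_tendsto:
  "(remainder u u' \<longlongrightarrow> (LINT s:{0..}|lborel. kernel2 u u' s * y2 s) + (LINT s:{0..}|lborel. u s * q s * (A s * x s))) at_top"
proof -
  have "((\<lambda>t. - (kernel1 u u' t * y2 t) + (LINT s:{0..t}|lborel. kernel2 u u' s * y2 s)
      + (LINT s:{0..t}|lborel. u s * q s * (A s * x s)))
      \<longlongrightarrow> - 0 + (LINT s:{0..}|lborel. kernel2 u u' s * y2 s) + (LINT s:{0..}|lborel. u s * q s * (A s * x s))) at_top"
    by (intro tendsto_intros kernel1_y2_tendsto[OF harmonic] tendsto_set_lebesgue_integral_at_top
        kernel2_y2_integrable[OF harmonic] uqAx_integrable) auto
  then show ?thesis
    by (simp add: remainder_def[abs_def])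
qed

end

lemma scaled_solution_tendsto:
  obtains c1 c2 where "((\<lambda>t. A t * x t - (c1 * sin (\<omega> * t) + c2 * cos (\<omega> * t))) \<longlongrightarrow> 0) at_top"
proof -
  obtain Lc Ls where Lc: "(remainder_cos \<longlongrightarrow> Lc) at_top" and Ls: "(remainder_sin \<longlongrightarrow> Ls) at_top"
    using remainder_tendsto[OF unit_harmonic_cos] remainder_tendsto[OF unit_harmonic_sin] by blast
  have "((\<lambda>t. \<omega> * (A t * x t) - (sin (\<omega> * t) * Lc - cos (\<omega> * t) * Ls)) \<longlongrightarrow> 0) at_top"
  proof (rule Lim_null_comparison)
    show "\<forall>\<^sub>F t in at_top. norm (\<omega> * (A t * x t) - (sin (\<omega> * t) * Lc - cos (\<omega> * t) * Ls))
        \<le> \<bar>remainder_cos t - Lc\<bar> + \<bar>remainder_sin t - Ls\<bar>"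
      using eventually_ge_at_top[of 0]
    proof eventually_elim
      case (elim t)
      have "\<omega> * (A t * x t) - (sin (\<omega> * t) * Lc - cos (\<omega> * t) * Ls)
          = sin (\<omega> * t) * (remainder_cos t - Lc) - cos (\<omega> * t) * (remainder_sin t - Ls)"
        unfolding scaled_solution_eq_remainders[OF elim] by (simp add: algebra_simps)
      then show ?case
        by (simp only: real_norm_def) (rule order_trans[OF abs_triangle_ineq4 add_mono];
            simp add: abs_mult mult_left_le_one_le)
    qed
    show "((\<lambda>t. \<bar>remainder_cos t - Lc\<bar> + \<bar>remainder_sin t - Ls\<bar>) \<longlongrightarrow> 0) at_top"
      using Lc Ls by (intro tendsto_add_zero tendsto_rabs_zero LIM_zero)
  qed
  then have "((\<lambda>t. (\<omega> * (A t * x t) - (sin (\<omega> * t) * Lc - cos (\<omega> * t) * Ls)) / \<omega>) \<longlongrightarrow> 0) at_top"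
    by (rule tendsto_divide_zero)
  then have "((\<lambda>t. A t * x t - (Lc / \<omega> * sin (\<omega> * t) + - Ls / \<omega> * cos (\<omega> * t))) \<longlongrightarrow> 0) at_top"
    using \<omega>_pos by (simp add: field_simps)
  then show ?thesis
    by (rule that)
qed

theorem asymptotics:
  "\<exists>c1 c2. (\<lambda>t. x t - (c1 * sin (\<omega> * t) + c2 * cos (\<omega> * t)) / A t) \<in> o[at_top](\<lambda>t. 1 / A t)"
proof -
  obtain c1 c2 where lim: "((\<lambda>t. A t * x t - (c1 * sin (\<omega> * t) + c2 * cos (\<omega> * t))) \<longlongrightarrow> 0) at_top"
    by (rule scaled_solution_tendsto)
  have "(x t - (c1 * sin (\<omega> * t) + c2 * cos (\<omega> * t)) / A t) / (1 / A t)
      = A t * x t - (c1 * sin (\<omega> * t) + c2 * cos (\<omega> * t))" for t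
    using A_pos[of t] by (simp add: field_simps)
  then have "(\<lambda>t. x t - (c1 * sin (\<omega> * t) + c2 * cos (\<omega> * t)) / A t) \<in> o[at_top](\<lambda>t. 1 / A t)"
    using lim A_pos by (intro smalloI_tendsto) (auto simp: less_imp_neq[symmetric])
  then show ?thesis
    by blast
qed

end

theorem mainTheorem19:
  fixes \<omega> :: real and p p' f x x' :: "real \<Rightarrow> real"
  assumes \<omega>_pos: "\<omega> > 0"
    and p_deriv: "\<And>t. t \<ge> 0 \<Longrightarrow> (p has_real_derivative p' t) (at t within {0..})"
    and p'_cont: "continuous_on {0..} p'"
    and p_pos: "\<And>t. t \<ge> 0 \<Longrightarrow> p t > 0"
    and p'_neg: "\<And>t. t \<ge> 0 \<Longrightarrow> p' t < 0"
    and p_int_infinite: "(\<integral>\<^sup>+ t\<in>{0..}. ennreal (p t) \<partial>lborel) = \<infinity>"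
    and p_sq_int: "set_integrable lborel {0..} (\<lambda>t. (p t)^2)"
    and f_loc: "\<And>t. t \<ge> 0 \<Longrightarrow> set_integrable lborel {0..t} f"
    and x_deriv: "\<And>t. t \<ge> 0 \<Longrightarrow> (x has_real_derivative x' t) (at t within {0..})"
    and x'_integrable: "\<And>t. t \<ge> 0 \<Longrightarrow>
          set_integrable lborel {0..t} (\<lambda>s. f s - p s * x' s - \<omega>^2 * x s)"
    and x'_eq: "\<And>t. t \<ge> 0 \<Longrightarrow>
          x' t = x' 0 + (LINT s:{0..t}|lborel. f s - p s * x' s - \<omega>^2 * x s)"
    and x0: "x 0 = 0" and x'0: "x' 0 = 0"
    and y2_small: "y2fun \<omega> f \<in> o[at_top](\<lambda>t. 1 / Afun p t)"
    and Ay2_int: "set_integrable lborel {0..} (\<lambda>s. Afun p s * \<bar>y2fun \<omega> f s\<bar>)"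
  shows "\<exists>c1 c2. (\<lambda>t. x t - (c1 * sin (\<omega> * t) + c2 * cos (\<omega> * t)) / Afun p t)
                   \<in> o[at_top](\<lambda>t. 1 / Afun p t)"
proof -
  interpret damped_oscillator_small_forcing \<omega> p p' f x x'
    using assms by unfold_locales (auto intro: less_imp_le)
  show ?thesis
    by (rule asymptotics)
qed

end
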